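(* Assume the standing setting in the context with $T=1$, and suppose that $\mathrm{NA}_2(\mathcal{P})$ holds, i.e. for every $\zeta\in\mathbb{R}^d$ (an $\mathcal{F}_0$-measurable, hence constant, vector), if $\zeta\in K_1$ $\mathcal{P}$-q.s. then $\zeta\in K_0$. Then for every $P\in\mathcal{P}$ and every $y\in\operatorname{Int}K_0^*$ there exist a probability $R\in\mathfrak{P}(\Omega_1)$ with $P\ll R\lll\mathcal{P}$ and a bounded $\mathcal{F}_1$-measurable $Y:\Omega_1\to\mathbb{R}^d$ with $Y(\omega)\in\operatorname{Int}K_1^*(\omega)$ for all $\omega$, such that $y=E^R[Y]$. In particular, $\mathrm{PCE}(\mathcal{P})$ holds, i.e.: for every $P\in\mathcal{P}$ and every $Y_0\in\operatorname{Int}K_0^*$ there exist $Q\in\mathfrak{P}(\Omega_1)$ and $Z_0\in\mathbb{R}^d$, $Z_1:\Omega_1\to\mathbb{R}^d$ $\mathcal{F}_1$-measurable with $P\ll Q\lll\mathcal{P}$, $Z_0=Y_0$, $Z_s\in\operatorname{Int}K_s^*$ $Q$-a.s. for $s=0,1$, and $E^Q[Z_1]=Z_0$.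
   Context: Setting (here $T=1$). $\Omega_1$ is a Polish space, $\Omega_0$ a singleton, $\mathcal{F}_1$ the universal completion of the Borel $\sigma$-field of $\Omega_1$, $\mathfrak{P}(\Omega_1)$ the Borel probability measures on $\Omega_1$. $\mathcal{P}=\mathcal{P}_0\subset\mathfrak{P}(\Omega_1)$ is a nonempty convex set which is analytic in $\mathfrak{P}(\Omega_1)$ (weak topology). A set is $\mathcal{P}$-polar if it is $P$-null for all $P\in\mathcal{P}$; "$\mathcal{P}$-q.s." means outside a $\mathcal{P}$-polar set. $R\lll\mathcal{P}$ means $R\ll R'$ for some $R'\in\mathcal{P}$. $K_0\subset\mathbb{R}^d$ is a closed convex cone containing $\mathbb{R}^d_+$, and $K_1:\Omega_1\to2^{\mathbb{R}^d}$ is a random set of closed convex cones containing $\mathbb{R}^d_+$ which is Borel-measurable ($\{\omega:K_1(\omega)\cap O\ne\emptyset\}$ Borel for each closed $O\subset\mathbb{R}^d$). $K_t^*(\omega):=\{y:\langle x,y\rangle\ge0\ \forall x\in K_t(\omega)\}$ is the dual cone. It is assumed for $t=0,1$ and all $\omega$: $K_t^*(\omega)\cap\partial\mathbb{R}^d_+=\{0\}$; $\operatorname{Int}K_t^*(\omega)\ne\emptyset$; and there is $c>0$ with $x^j/y^j\le c(x^i/y^i)$ for all $i,j$ and all $x,y\in K_t^*(\omega)\setminus\{0\}$. *)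

theory Defs
  imports "HOL-Probability.Probability"
begin

definition borel_probs :: "'a::topological_space measure set" where
  "borel_probs = {M. prob_space M \<and> sets M = sets borel}"

definition weak_topology :: "'a::topological_space measure topology" where
  "weak_topology = subtopology
     (topology_generated_by
        {{M. (\<integral>x. f x \<partial>M) \<in> U} | (f :: 'a \<Rightarrow> real) U.
            continuous_on UNIV f \<and> bounded (range f) \<and> open U})
     borel_probs"

definition analytic_probs :: "'a::topological_space measure set \<Rightarrow> bool" where
  "analytic_probs S \<longleftrightarrow> S = {} \<or>
     (\<exists>g :: (nat \<Rightarrow> nat) \<Rightarrow> 'a measure.
         continuous_map euclidean weak_topology g \<and> range g = S)"

definition univ_sets :: "'a::topological_space set set" where
  "univ_sets = {A. \<forall>\<mu>\<in>borel_probs. A \<in> sets (completion \<mu>)}"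

definition F1_measurable :: "('a::topological_space \<Rightarrow> 'b::topological_space) \<Rightarrow> bool" where
  "F1_measurable Y \<longleftrightarrow> (\<forall>B\<in>sets borel. Y -` B \<in> univ_sets)"

definition polar :: "'a measure set \<Rightarrow> 'a set \<Rightarrow> bool" where
  "polar \<P> N \<longleftrightarrow> (\<forall>P\<in>\<P>. N \<in> null_sets (completion P))"

definition qs :: "'a measure set \<Rightarrow> ('a \<Rightarrow> bool) \<Rightarrow> bool" where
  "qs \<P> \<phi> \<longleftrightarrow> polar \<P> {\<omega>. \<not> \<phi> \<omega>}"

definition dominated_by :: "'a measure \<Rightarrow> 'a measure set \<Rightarrow> bool" where
  "dominated_by R \<P> \<longleftrightarrow> (\<exists>R'\<in>\<P>. absolutely_continuous R' R)"

definition dual_cone :: "(real^'n::finite) set \<Rightarrow> (real^'n) set" where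
  "dual_cone K = {y. \<forall>x\<in>K. 0 \<le> x \<bullet> y}"


definition orthant :: "(real^'n::finite) set" where
  "orthant = {x. \<forall>i. 0 \<le> x $ i}"

definition solvency_cone :: "(real^'n::finite) set \<Rightarrow> bool" where
  "solvency_cone K \<longleftrightarrow> closed K \<and> convex K \<and> cone K \<and> orthant \<subseteq> K"

definition NA2 :: "'a measure set \<Rightarrow> (real^'n::finite) set \<Rightarrow> ('a \<Rightarrow> (real^'n) set) \<Rightarrow> bool" where
  "NA2 \<P> K0 K1 \<longleftrightarrow> (\<forall>\<zeta>. qs \<P> (\<lambda>\<omega>. \<zeta> \<in> K1 \<omega>) \<longrightarrow> \<zeta> \<in> K0)"

definition PCE :: "'a::topological_space measure set \<Rightarrow> (real^'n::finite) set \<Rightarrow> ('a \<Rightarrow> (real^'n) set) \<Rightarrow> bool" where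
  "PCE \<P> K0 K1 \<longleftrightarrow>
    (\<forall>P\<in>\<P>. \<forall>Y0\<in>interior (dual_cone K0).
       \<exists>Q Z0 Z1. Q \<in> borel_probs \<and> F1_measurable Z1 \<and>
         absolutely_continuous Q P \<and> dominated_by Q \<P> \<and> Z0 = Y0 \<and>
         Z0 \<in> interior (dual_cone K0) \<and>
         (AE \<omega> in completion Q. Z1 \<omega> \<in> interior (dual_cone (K1 \<omega>))) \<and>
         integrable (completion Q) Z1 \<and>
         (\<integral>\<omega>. Z1 \<omega> \<partial>completion Q) = Z0)"

end

theory Submission
  imports Defs
begin

text \<open>
  For a measure \<open>R\<close>, the means
  \<open>E\<^sup>R[Y]\<close> of the bounded Borel selectors \<open>Y\<close> of \<open>int K\<^sub>1\<^sup>*\<close> form a convex cone; if \<open>y\<close>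
  is not among them, a separating hyperplane gives a unit vector \<open>\<zeta>\<close> with \<open>\<zeta> \<bullet> y \<le> 0\<close>
  and \<open>\<zeta> \<in> K\<^sub>1\<close> \<open>R\<close>-a.s. Suppose this happens for every \<open>R \<in> \<P>\<close> dominating \<open>P\<close>.
  By convexity of \<open>\<P>\<close> these \<open>R\<close> are directed under absolute continuity, so the closed sets
  \<open>{\<zeta>. \<zeta> \<in> K\<^sub>1 R-a.s.}\<close> meet the compact set \<open>{|\<zeta>| = 1, \<zeta> \<bullet> y \<le> 0}\<close> with the finite
  intersection property. A common \<open>\<zeta>\<close> lies in \<open>K\<^sub>1\<close> quasi-surely, hence in \<open>K\<^sub>0\<close> by \<open>NA\<^sub>2\<close>,
  which contradicts \<open>\<zeta> \<bullet> y \<le> 0\<close>.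

  This compactness argument replaces measurable selection.
\<close>

lemma interior_dual_cone_inner_pos:
  fixes K :: "(real^'n::finite) set"
  assumes "q \<in> interior (dual_cone K)" "x \<in> K" "x \<noteq> 0"
  shows "0 < x \<bullet> q"
proof -
  obtain e where e: "e > 0" "ball q e \<subseteq> dual_cone K" using assms(1) mem_interior by blast
  define v where "v = q - ((e/2) / norm x) *\<^sub>R x"
  have "dist q v = e/2" using e assms(3) by (simp add: v_def dist_norm)
  hence "v \<in> dual_cone K" using e by auto
  hence "0 \<le> x \<bullet> v" using assms(2) by (auto simp: dual_cone_def)
  also have "x \<bullet> v = x \<bullet> q - (e/2) * norm x"
    using assms(3) by (simp add: v_def inner_diff_right dot_square_norm power2_eq_square)
  finally have "(e/2) * norm x \<le> x \<bullet> q" by simp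
  moreover have "0 < (e/2) * norm x" using e assms(3) by simp
  ultimately show ?thesis by linarith
qed

lemma dual_cone_add:
  "p \<in> dual_cone K \<Longrightarrow> q \<in> dual_cone K \<Longrightarrow> p + q \<in> dual_cone K"
  by (auto simp: dual_cone_def inner_add_right)

lemma dual_cone_scaleR:
  "p \<in> dual_cone K \<Longrightarrow> 0 \<le> c \<Longrightarrow> c *\<^sub>R p \<in> dual_cone K"
  by (auto simp: dual_cone_def)

lemma interior_dual_cone_add:
  assumes "q \<in> interior (dual_cone K)" "p \<in> dual_cone K"
  shows "q + p \<in> interior (dual_cone K)"
proof -
  obtain e where e: "e > 0" "ball q e \<subseteq> dual_cone K" using assms(1) mem_interior by blast
  have "ball (q + p) e \<subseteq> dual_cone K"
  proof
    fix v assume "v \<in> ball (q + p) e"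
    hence "v - p \<in> ball q e" by (simp add: dist_norm algebra_simps)
    hence "(v - p) + p \<in> dual_cone K" using e assms(2) by (blast intro: dual_cone_add)
    thus "v \<in> dual_cone K" by simp
  qed
  thus ?thesis using e mem_interior by blast
qed

lemma interior_dual_cone_scaleR:
  assumes "q \<in> interior (dual_cone K)" "0 < c"
  shows "c *\<^sub>R q \<in> interior (dual_cone K)"
proof -
  obtain e where e: "e > 0" "ball q e \<subseteq> dual_cone K" using assms(1) mem_interior by blast
  have "ball (c *\<^sub>R q) (c * e) \<subseteq> dual_cone K"
  proof
    fix v assume "v \<in> ball (c *\<^sub>R q) (c * e)"
    moreover have "q - v /\<^sub>R c = (1 / c) *\<^sub>R (c *\<^sub>R q - v)"
      using assms(2) by (simp add: algebra_simps inverse_eq_divide)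
    ultimately have "dist q (v /\<^sub>R c) < e" using assms(2)
      by (simp add: dist_norm dist_commute pos_divide_less_eq mult.commute)
    hence "v /\<^sub>R c \<in> dual_cone K" using e by auto
    moreover have "v = c *\<^sub>R (v /\<^sub>R c)" using assms(2) by simp
    ultimately show "v \<in> dual_cone K" using assms(2) by (metis dual_cone_scaleR less_imp_le)
  qed
  thus ?thesis using e assms(2) mem_interior by (metis mult_pos_pos)
qed

lemma interior_dual_cone_iff:
  fixes K :: "(real^'n::finite) set"
  assumes "closed K" "cone K"
  shows "q \<in> interior (dual_cone K) \<longleftrightarrow> (\<forall>x\<in>K. x \<noteq> 0 \<longrightarrow> 0 < x \<bullet> q)"
proof
  assume "q \<in> interior (dual_cone K)"
  thus "\<forall>x\<in>K. x \<noteq> 0 \<longrightarrow> 0 < x \<bullet> q" using interior_dual_cone_inner_pos by blast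
next
  assume pos: "\<forall>x\<in>K. x \<noteq> 0 \<longrightarrow> 0 < x \<bullet> q"
  let ?S = "K \<inter> sphere 0 1"
  have unit: "(1 / norm x) *\<^sub>R x \<in> ?S" if "x \<in> K" "x \<noteq> 0" for x
    using that assms(2) by (auto simp: cone_def)
  show "q \<in> interior (dual_cone K)"
  proof (cases "?S = {}")
    case True
    hence "K \<subseteq> {0}" using unit by blast
    hence "dual_cone K = UNIV" by (auto simp: dual_cone_def)
    thus ?thesis by simp
  next
    case False
    have "compact ?S" by (intro closed_Int_compact assms(1) compact_sphere)
    moreover have "continuous_on ?S (\<lambda>x. x \<bullet> q)" by (intro continuous_intros)
    ultimately obtain x0 where x0: "x0 \<in> ?S" "\<And>x. x \<in> ?S \<Longrightarrow> x0 \<bullet> q \<le> x \<bullet> q"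
      using continuous_attains_inf[OF _ False] by blast
    define m where "m = x0 \<bullet> q"
    have m: "m > 0" using x0 pos by (auto simp: m_def)
    have "ball q m \<subseteq> dual_cone K"
      unfolding dual_cone_def
    proof (intro subsetI CollectI ballI)
      fix v x assume v: "v \<in> ball q m" and x: "x \<in> K"
      show "0 \<le> x \<bullet> v"
      proof (cases "x = 0")
        case False
        define x' where "x' = (1 / norm x) *\<^sub>R x"
        have x'S: "x' \<in> ?S" using unit x False by (simp add: x'_def)
        have "\<bar>x' \<bullet> (v - q)\<bar> \<le> norm x' * norm (v - q)" by (rule Cauchy_Schwarz_ineq2)
        also have "\<dots> < m" using x'S v by (simp add: dist_norm norm_minus_commute)
        finally have "0 < x' \<bullet> v" using x0(2)[OF x'S] by (simp add: m_def inner_diff_right)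
        thus ?thesis using False by (simp add: x'_def zero_less_divide_iff)
      qed simp
    qed
    thus ?thesis using m by (meson centre_in_ball interior_maximal open_ball subsetD)
  qed
qed

lemma exists_dual_cone_inner_neg:
  fixes K :: "(real^'n::finite) set"
  assumes "closed K" "convex K" "cone K" "K \<noteq> {}" "z \<notin> K"
  shows "\<exists>a\<in>dual_cone K. z \<bullet> a < 0"
proof -
  obtain a b where ab: "a \<bullet> z < b" "\<forall>x\<in>K. b < a \<bullet> x"
    using separating_hyperplane_closed_point[OF assms(2,1,5)] by blast
  have "0 \<in> K" using assms(3,4) unfolding cone_def by (metis all_not_in_conv scaleR_zero_left order_refl)
  hence b: "b < 0" using ab by auto
  have "0 \<le> x \<bullet> a" if x: "x \<in> K" for x
  proof (rule ccontr)
    assume neg: "\<not> 0 \<le> x \<bullet> a"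
    hence "(b / (x \<bullet> a)) *\<^sub>R x \<in> K"
      using assms(3) x b by (simp add: cone_def divide_nonpos_neg)
    hence "b < a \<bullet> ((b / (x \<bullet> a)) *\<^sub>R x)" using ab by blast
    thus False using neg by (simp add: inner_commute)
  qed
  moreover have "z \<bullet> a < 0" using ab b by (simp add: inner_commute)
  ultimately show ?thesis by (auto simp: dual_cone_def)
qed

lemma exists_interior_dual_cone_inner_neg:
  fixes K :: "(real^'n::finite) set"
  assumes "closed K" "convex K" "cone K" "K \<noteq> {}" "interior (dual_cone K) \<noteq> {}" "z \<notin> K"
  shows "\<exists>q\<in>interior (dual_cone K). z \<bullet> q < 0"
proof -
  obtain a where a: "a \<in> dual_cone K" "z \<bullet> a < 0"
    using exists_dual_cone_inner_neg[OF assms(1-4,6)] by blast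
  obtain w where w: "w \<in> interior (dual_cone K)" using assms(5) by blast
  define t where "t = (\<bar>z \<bullet> w\<bar> + 1) / - (z \<bullet> a)"
  have t: "0 < t" using a(2) unfolding t_def by (intro divide_pos_pos) auto
  have "w + t *\<^sub>R a \<in> interior (dual_cone K)"
    using t by (intro interior_dual_cone_add w dual_cone_scaleR a) auto
  moreover have "z \<bullet> (w + t *\<^sub>R a) = z \<bullet> w - (\<bar>z \<bullet> w\<bar> + 1)"
    using a(2) by (simp add: t_def inner_add_right inner_diff_right)
  ultimately show ?thesis by (intro bexI[of _ "w + t *\<^sub>R a"]) auto
qed

lemma nonneg_if_nonneg_add_pos_multiples:
  fixes a b :: real
  assumes "\<And>\<epsilon>. 0 < \<epsilon> \<Longrightarrow> 0 \<le> a + \<epsilon> * b"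
  shows "0 \<le> a"
proof (rule ccontr)
  assume "\<not> 0 \<le> a"
  define \<epsilon> where "\<epsilon> = - a / (\<bar>b\<bar> + 1)"
  have "0 < \<epsilon>" using \<open>\<not> 0 \<le> a\<close> unfolding \<epsilon>_def by (intro divide_pos_pos) auto
  moreover have "\<epsilon> * b < - a"
  proof -
    have "\<epsilon> * b \<le> \<epsilon> * \<bar>b\<bar>" using \<open>0 < \<epsilon>\<close> by (simp add: mult_left_mono)
    also have "\<dots> < \<epsilon> * (\<bar>b\<bar> + 1)" using \<open>0 < \<epsilon>\<close> by simp
    also have "\<dots> = - a" by (simp add: \<epsilon>_def)
    finally show ?thesis .
  qed
  ultimately show False using assms by fastforce
qed

lemma separating_hyperplane_convex_cone:
  fixes C :: "'a::euclidean_space set"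
  assumes "convex C" "C \<noteq> {}" "\<And>x c. x \<in> C \<Longrightarrow> 0 < c \<Longrightarrow> c *\<^sub>R x \<in> C" "y \<notin> C"
  shows "\<exists>a. a \<noteq> 0 \<and> a \<bullet> y \<le> 0 \<and> (\<forall>x\<in>C. 0 \<le> a \<bullet> x)"
proof -
  have "0 \<notin> (+) (- y) ` C" using assms(4) by auto
  then obtain a where a: "a \<noteq> 0" "\<forall>x\<in>(+) (- y) ` C. 0 \<le> a \<bullet> x"
    using separating_hyperplane_set_0 convex_translation[OF assms(1)] by blast
  have le: "a \<bullet> y \<le> c * (a \<bullet> x)" if "x \<in> C" "0 < c" for x c
    using a(2) assms(3)[OF that] by (auto simp: inner_diff_right)
  have "0 \<le> a \<bullet> x" if x: "x \<in> C" for x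
  proof (rule nonneg_if_nonneg_add_pos_multiples)
    fix \<epsilon> :: real assume "0 < \<epsilon>"
    with le[OF x, of "1 / \<epsilon>"] show "0 \<le> a \<bullet> x + \<epsilon> * - (a \<bullet> y)"
      by (simp add: field_simps)
  qed
  moreover obtain x where "x \<in> C" using assms(2) by blast
  have "0 \<le> - (a \<bullet> y)"
  proof (rule nonneg_if_nonneg_add_pos_multiples)
    fix c :: real assume "0 < c"
    with le[OF \<open>x \<in> C\<close>] show "0 \<le> - (a \<bullet> y) + c * (a \<bullet> x)" by simp
  qed
  ultimately show ?thesis using a(1) by auto
qed

lemma solvency_coneD:
  assumes "solvency_cone K"
  shows "closed K" "convex K" "cone K" "K \<noteq> {}"
proof -
  have "0 \<in> orthant" by (simp add: orthant_def)
  thus "closed K" "convex K" "cone K" "K \<noteq> {}" using assms by (auto simp: solvency_cone_def)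
qed

lemma sets_interior_dual_cone_borel:
  fixes K :: "'a::topological_space \<Rightarrow> (real^'d::finite) set"
  assumes closed: "\<And>\<omega>. closed (K \<omega>)" and cone: "\<And>\<omega>. cone (K \<omega>)"
    and K_meas: "\<And>C. closed C \<Longrightarrow> {\<omega>. K \<omega> \<inter> C \<noteq> {}} \<in> sets borel"
  shows "{\<omega>. v \<in> interior (dual_cone (K \<omega>))} \<in> sets borel"
proof -
  define C where "C = sphere 0 1 \<inter> {x. v \<bullet> x \<le> 0}"
  have "closed C" by (simp add: C_def closed_Int closed_halfspace_le)
  have "{\<omega>. v \<in> interior (dual_cone (K \<omega>))} = UNIV - {\<omega>. K \<omega> \<inter> C \<noteq> {}}"
  proof (intro set_eqI iffI)
    fix \<omega> assume "\<omega> \<in> {\<omega>. v \<in> interior (dual_cone (K \<omega>))}"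
    hence "\<forall>x\<in>K \<omega>. x \<noteq> 0 \<longrightarrow> 0 < x \<bullet> v"
      using interior_dual_cone_iff[OF closed cone] by blast
    thus "\<omega> \<in> UNIV - {\<omega>. K \<omega> \<inter> C \<noteq> {}}" by (fastforce simp: C_def inner_commute)
  next
    fix \<omega> assume \<omega>: "\<omega> \<in> UNIV - {\<omega>. K \<omega> \<inter> C \<noteq> {}}"
    have "0 < x \<bullet> v" if x: "x \<in> K \<omega>" "x \<noteq> 0" for x
    proof (rule ccontr)
      assume "\<not> 0 < x \<bullet> v"
      hence "sgn x \<in> C"
        using x by (simp add: C_def sgn_div_norm inner_commute not_less mult_nonneg_nonpos)
      moreover have "sgn x \<in> K \<omega>" using cone[of \<omega>] x by (simp add: cone_def sgn_div_norm)
      ultimately show False using \<omega> by blast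
    qed
    thus "\<omega> \<in> {\<omega>. v \<in> interior (dual_cone (K \<omega>))}"
      using interior_dual_cone_iff[OF closed cone] by blast
  qed
  thus ?thesis using sets.compl_sets[OF K_meas[OF \<open>closed C\<close>]] by simp
qed

lemma countable_interior_dual_cone_family:
  fixes K :: "'a \<Rightarrow> (real^'d::finite) set"
  assumes closed: "\<And>\<omega>. closed (K \<omega>)" and convex: "\<And>\<omega>. convex (K \<omega>)"
    and cone: "\<And>\<omega>. cone (K \<omega>)" and ne: "\<And>\<omega>. K \<omega> \<noteq> {}"
    and int_ne: "\<And>\<omega>. interior (dual_cone (K \<omega>)) \<noteq> {}"
  obtains u :: "nat \<Rightarrow> real^'d" where "\<And>n. norm (u n) \<le> 1"
    and "\<And>\<omega>. \<exists>n. u n \<in> interior (dual_cone (K \<omega>))"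
    and "\<And>\<omega> \<zeta>. \<zeta> \<notin> K \<omega> \<Longrightarrow> \<exists>n. u n \<in> interior (dual_cone (K \<omega>)) \<and> \<zeta> \<bullet> u n < 0"
proof -
  obtain D :: "(real^'d) set"
    where D: "countable D" "\<And>X. open X \<Longrightarrow> X \<noteq> {} \<Longrightarrow> \<exists>d\<in>D. d \<in> X"
    using countable_dense_setE by auto
  have "D \<noteq> {}" using D(2)[of UNIV] by auto
  define q where "q = from_nat_into D"
  have dense: "\<exists>n. q n \<in> X" if "open X" "X \<noteq> {}" for X
    using D(2)[OF that] range_from_nat_into[OF \<open>D \<noteq> {}\<close> D(1)] unfolding q_def
    by (metis imageE)
  have sgn_int: "sgn (q n) \<in> interior (dual_cone (K \<omega>))"
    if "q n \<in> interior (dual_cone (K \<omega>))" for n \<omega>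
    using that interior_dual_cone_scaleR[OF that, of "inverse (norm (q n))"]
    by (cases "q n = 0") (simp_all add: sgn_div_norm)
  show ?thesis
  proof
    show "norm (sgn (q n)) \<le> 1" for n by (simp add: norm_sgn)
    show "\<exists>n. sgn (q n) \<in> interior (dual_cone (K \<omega>))" for \<omega>
      using dense[OF open_interior int_ne] sgn_int by blast
  next
    fix \<omega> \<zeta> assume "\<zeta> \<notin> K \<omega>"
    then obtain y where "y \<in> interior (dual_cone (K \<omega>))" "\<zeta> \<bullet> y < 0"
      using exists_interior_dual_cone_inner_neg[OF closed convex cone ne int_ne] by blast
    hence "open (interior (dual_cone (K \<omega>)) \<inter> {v. \<zeta> \<bullet> v < 0})"
      "interior (dual_cone (K \<omega>)) \<inter> {v. \<zeta> \<bullet> v < 0} \<noteq> {}"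
      by (auto intro: open_Int open_halfspace_lt)
    then obtain n where "q n \<in> interior (dual_cone (K \<omega>))" "\<zeta> \<bullet> q n < 0"
      using dense by blast
    moreover have "\<zeta> \<bullet> sgn (q n) = (\<zeta> \<bullet> q n) / norm (q n)"
      by (simp add: sgn_div_norm divide_inverse_commute)
    ultimately show "\<exists>n. sgn (q n) \<in> interior (dual_cone (K \<omega>)) \<and> \<zeta> \<bullet> sgn (q n) < 0"
      using sgn_int by (metis divide_neg_pos inner_zero_right less_irrefl zero_less_norm_iff)
  qed
qed

definition ac_directed :: "'a measure set \<Rightarrow> bool" where
  "ac_directed S \<longleftrightarrow>
     (\<forall>R1\<in>S. \<forall>R2\<in>S. \<exists>M\<in>S. absolutely_continuous M R1 \<and> absolutely_continuous M R2)"

lemma absolutely_continuous_trans: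
  "absolutely_continuous L M \<Longrightarrow> absolutely_continuous M N \<Longrightarrow> absolutely_continuous L N"
  by (auto simp: absolutely_continuous_def)

lemma ac_directed_finite:
  assumes "ac_directed S" "S \<noteq> {}" "finite F" "F \<subseteq> S"
  shows "\<exists>M\<in>S. \<forall>R\<in>F. absolutely_continuous M R"
  using assms(3,4)
proof (induction F rule: finite_induct)
  case empty thus ?case using assms(2) by blast
next
  case (insert R F)
  then obtain M where M: "M \<in> S" "\<forall>R\<in>F. absolutely_continuous M R" by blast
  obtain M' where M': "M' \<in> S" "absolutely_continuous M' M" "absolutely_continuous M' R"
    using assms(1) M(1) insert.prems unfolding ac_directed_def by blast
  have "absolutely_continuous M' R'" if "R' \<in> F" for R'
    using absolutely_continuous_trans[OF M'(2)] M(2) that by blast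
  thus ?case using M' by blast
qed

lemma absolutely_continuous_mixture:
  assumes "M \<in> borel_probs" "P \<in> borel_probs" "0 < t"
    and mix: "\<forall>A\<in>sets borel. measure M A = t * measure P A + (1 - t) * measure Q A" "t \<le> 1"
  shows "absolutely_continuous M P"
  unfolding absolutely_continuous_def
proof
  fix N assume N: "N \<in> null_sets M"
  interpret P: prob_space P using assms(2) by (simp add: borel_probs_def)
  have "N \<in> sets borel" using null_setsD2[OF N] assms(1) by (simp add: borel_probs_def)
  moreover have "measure M N = 0" using null_setsD1[OF N] by (simp add: measure_def)
  ultimately have "t * measure P N + (1 - t) * measure Q N = 0" using mix(1) by simp
  moreover have "0 \<le> t * measure P N" "0 \<le> (1 - t) * measure Q N" using assms(3) mix(2) by simp_all
  ultimately have "t * measure P N = 0" by linarith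
  hence "measure P N = 0" using assms(3) by simp
  thus "N \<in> null_sets P"
    using \<open>N \<in> sets borel\<close> assms(2) by (simp add: borel_probs_def P.emeasure_eq_measure null_sets_def)
qed

lemma ac_directed_if_mixtures:
  assumes sub: "\<P> \<subseteq> borel_probs"
    and mix: "\<And>P Q t. P \<in> \<P> \<Longrightarrow> Q \<in> \<P> \<Longrightarrow> 0 \<le> t \<Longrightarrow> t \<le> 1 \<Longrightarrow>
      \<exists>M\<in>\<P>. \<forall>A\<in>sets borel. measure M A = t * measure P A + (1 - t) * measure Q A"
  shows "ac_directed \<P>"
  unfolding ac_directed_def
proof (intro ballI)
  fix P Q assume PQ: "P \<in> \<P>" "Q \<in> \<P>"
  then obtain M where M: "M \<in> \<P>"
    and eq: "\<forall>A\<in>sets borel. measure M A = (1/2) * measure P A + (1 - 1/2) * measure Q A"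
    using mix[of P Q "1/2"] by auto
  have eq': "\<forall>A\<in>sets borel. measure M A = (1/2) * measure Q A + (1 - 1/2) * measure P A"
    using eq by simp
  have "absolutely_continuous M P" "absolutely_continuous M Q"
    using absolutely_continuous_mixture[of M P "1/2" Q, OF _ _ _ eq]
      absolutely_continuous_mixture[of M Q "1/2" P, OF _ _ _ eq'] M PQ sub by auto
  thus "\<exists>M\<in>\<P>. absolutely_continuous M P \<and> absolutely_continuous M Q" using M by blast
qed

lemma closed_AE_mem:
  fixes K :: "'a \<Rightarrow> 'b::first_countable_topology set"
  assumes "\<And>\<omega>. closed (K \<omega>)"
  shows "closed {\<zeta>. AE \<omega> in R. \<zeta> \<in> K \<omega>}"
  unfolding closed_sequential_limits
proof (intro allI impI)
  fix x l assume "(\<forall>n. x n \<in> {\<zeta>. AE \<omega> in R. \<zeta> \<in> K \<omega>}) \<and> x \<longlonglongrightarrow> l"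
  hence ae: "AE \<omega> in R. \<forall>n. x n \<in> K \<omega>" and lim: "x \<longlonglongrightarrow> l" by (simp_all add: AE_all_countable)
  from ae have "AE \<omega> in R. l \<in> K \<omega>"
    by (rule eventually_mono) (use closed_sequentially[OF assms _ lim] in blast)
  thus "l \<in> {\<zeta>. AE \<omega> in R. \<zeta> \<in> K \<omega>}" by simp
qed

lemma AE_common_mem_if_ac_directed:
  fixes K :: "'a::topological_space \<Rightarrow> 'b::first_countable_topology set"
  assumes S: "S \<subseteq> borel_probs" "ac_directed S" "S \<noteq> {}"
    and closed: "\<And>\<omega>. closed (K \<omega>)" and "compact C"
    and ex: "\<And>R. R \<in> S \<Longrightarrow> \<exists>\<zeta>\<in>C. AE \<omega> in R. \<zeta> \<in> K \<omega>"
  shows "\<exists>\<zeta>\<in>C. \<forall>R\<in>S. AE \<omega> in R. \<zeta> \<in> K \<omega>"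
proof -
  let ?W = "\<lambda>R. {\<zeta>. AE \<omega> in R. \<zeta> \<in> K \<omega>}"
  have "C \<inter> \<Inter>(?W ` S) \<noteq> {}"
  proof (rule compact_imp_fip[OF \<open>compact C\<close>])
    have "closed (?W R)" for R by (rule closed_AE_mem) (rule closed)
    thus "closed T" if "T \<in> ?W ` S" for T using that by blast
  next
    fix F assume F: "finite F" "F \<subseteq> ?W ` S"
    obtain S' where S': "S' \<subseteq> S" "finite S'" "F = ?W ` S'"
      using finite_subset_image[OF F] by blast
    obtain M where M: "M \<in> S" "\<forall>R\<in>S'. absolutely_continuous M R"
      using ac_directed_finite[OF S(2,3) S'(2,1)] by blast
    obtain \<zeta> where \<zeta>: "\<zeta> \<in> C" "AE \<omega> in M. \<zeta> \<in> K \<omega>" using ex[OF M(1)] by blast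
    have "\<zeta> \<in> ?W R" if "R \<in> S'" for R
    proof -
      have "R \<in> borel_probs" "M \<in> borel_probs" using that S'(1) M(1) S(1) by auto
      hence "sets R = sets M" by (simp add: borel_probs_def)
      moreover have "absolutely_continuous M R" using M(2) that by blast
      ultimately show ?thesis using absolutely_continuous_AE[OF _ _ \<zeta>(2)] by simp
    qed
    hence "\<zeta> \<in> C \<inter> \<Inter>F" using \<zeta>(1) S'(3) by blast
    thus "C \<inter> \<Inter>F \<noteq> {}" by blast
  qed
  thus ?thesis by blast
qed

lemma qs_if_AE:
  assumes "\<P> \<subseteq> borel_probs" "\<And>P. P \<in> \<P> \<Longrightarrow> AE \<omega> in P. \<phi> \<omega>"
  shows "qs \<P> \<phi>"
  unfolding qs_def polar_def
proof
  fix P assume "P \<in> \<P>"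
  then obtain N where N: "N \<in> null_sets P" "{\<omega> \<in> space P. \<not> \<phi> \<omega>} \<subseteq> N"
    using assms(2) by (auto simp: eventually_ae_filter)
  have "space P = UNIV"
    using sets_eq_imp_space_eq[of P borel] \<open>P \<in> \<P>\<close> assms(1) by (auto simp: borel_probs_def)
  thus "{\<omega>. \<not> \<phi> \<omega>} \<in> null_sets (completion P)"
    using N by (intro null_sets_completion_subset[OF _ null_sets_completionI]) auto
qed

locale dual_cone_selectors =
  fixes K :: "'a::topological_space \<Rightarrow> (real^'d::finite) set"
    and u :: "nat \<Rightarrow> real^'d"
  assumes norm_u: "\<And>n. norm (u n) \<le> 1"
    and sets_u: "\<And>n. {\<omega>. u n \<in> interior (dual_cone (K \<omega>))} \<in> sets borel"
    and u_cover: "\<And>\<omega>. \<exists>n. u n \<in> interior (dual_cone (K \<omega>))"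
    and u_separating: "\<And>\<omega> \<zeta>. \<zeta> \<notin> K \<omega> \<Longrightarrow> \<exists>n. u n \<in> interior (dual_cone (K \<omega>)) \<and> \<zeta> \<bullet> u n < 0"
begin

definition selector :: "('a \<Rightarrow> real^'d) \<Rightarrow> bool" where
  "selector Y \<longleftrightarrow> Y \<in> borel_measurable borel \<and> bounded (range Y) \<and>
     (\<forall>\<omega>. Y \<omega> \<in> interior (dual_cone (K \<omega>)))"

definition selector_means :: "'a measure \<Rightarrow> (real^'d) set" where
  "selector_means R = {integral\<^sup>L R Y | Y. selector Y}"

lemma ex_selector: "\<exists>Y. selector Y"
proof
  let ?Y = "\<lambda>\<omega>. u (LEAST n. u n \<in> interior (dual_cone (K \<omega>)))"
  have "?Y \<in> borel_measurable borel"
    using sets_u by (intro measurable_compose[OF measurable_Least]) (auto simp: pred_def)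
  moreover have "bounded (range ?Y)" using norm_u by (auto simp: bounded_iff)
  moreover have "?Y \<omega> \<in> interior (dual_cone (K \<omega>))" for \<omega>
    using LeastI_ex[OF u_cover] .
  ultimately show "selector ?Y" by (simp add: selector_def)
qed

lemma selector_add_dual:
  assumes "selector Y" "Z \<in> borel_measurable borel" "bounded (range Z)"
    and "\<And>\<omega>. Z \<omega> \<in> dual_cone (K \<omega>)"
  shows "selector (\<lambda>\<omega>. Y \<omega> + Z \<omega>)"
  using assms unfolding selector_def
  by (auto intro: interior_dual_cone_add bounded_plus_comp)

lemma selector_scaleR:
  assumes "selector Y" "0 < c"
  shows "selector (\<lambda>\<omega>. c *\<^sub>R Y \<omega>)"
proof -
  have "range (\<lambda>\<omega>. c *\<^sub>R Y \<omega>) = (\<lambda>x. c *\<^sub>R x) ` range Y" by auto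
  thus ?thesis using assms unfolding selector_def
    by (auto intro: interior_dual_cone_scaleR bounded_scaling)
qed

lemma integrable_selector:
  assumes "R \<in> borel_probs" "selector Y"
  shows "integrable R Y"
proof -
  interpret prob_space R using assms(1) by (simp add: borel_probs_def)
  have sets_R: "sets R = sets borel" using assms(1) by (simp add: borel_probs_def)
  obtain B where "\<forall>\<omega>. norm (Y \<omega>) \<le> B" using assms(2) by (auto simp: selector_def bounded_iff)
  moreover have "Y \<in> borel_measurable R"
    using assms(2) unfolding selector_def measurable_cong_sets[OF sets_R refl] by simp
  ultimately show ?thesis by (intro integrable_const_bound[where B = B]) auto
qed

lemma selector_add:
  assumes "selector Y" "selector Z"
  shows "selector (\<lambda>\<omega>. Y \<omega> + Z \<omega>)"
  using assms interior_subset by (intro selector_add_dual) (auto simp: selector_def)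

lemma selector_means_nonempty: "selector_means R \<noteq> {}"
  using ex_selector by (auto simp: selector_means_def)

lemma selector_means_scaleR:
  assumes "x \<in> selector_means R" "0 < c"
  shows "c *\<^sub>R x \<in> selector_means R"
proof -
  obtain Y where "selector Y" "x = integral\<^sup>L R Y" using assms(1) by (auto simp: selector_means_def)
  moreover have "c *\<^sub>R integral\<^sup>L R Y = integral\<^sup>L R (\<lambda>\<omega>. c *\<^sub>R Y \<omega>)" by simp
  ultimately show ?thesis
    using selector_scaleR[OF _ assms(2)] unfolding selector_means_def by fastforce
qed

lemma convex_selector_means:
  assumes "R \<in> borel_probs"
  shows "convex (selector_means R)"
  unfolding convex_def
proof (intro ballI allI impI)
  fix x z and s t :: real
  assume x: "x \<in> selector_means R" and z: "z \<in> selector_means R"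
    and st: "0 \<le> s" "0 \<le> t" "s + t = 1"
  consider "s = 0" | "t = 0" | "0 < s" "0 < t" using st by fastforce
  thus "s *\<^sub>R x + t *\<^sub>R z \<in> selector_means R"
  proof cases
    case 3
    obtain Y1 Y2 where Y: "selector Y1" "selector Y2" "x = integral\<^sup>L R Y1" "z = integral\<^sup>L R Y2"
      using x z by (auto simp: selector_means_def)
    have "selector (\<lambda>\<omega>. s *\<^sub>R Y1 \<omega> + t *\<^sub>R Y2 \<omega>)"
      using 3 Y by (intro selector_add selector_scaleR)
    moreover have "integral\<^sup>L R (\<lambda>\<omega>. s *\<^sub>R Y1 \<omega> + t *\<^sub>R Y2 \<omega>) = s *\<^sub>R x + t *\<^sub>R z"
      using Y integrable_selector[OF assms] by simp
    ultimately show ?thesis unfolding selector_means_def by force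
  qed (use x z st in simp_all)
qed

text \<open>Adding \<open>u n\<close> on \<open>A n\<close> to a small multiple of a selector gives a selector, which forces
  \<open>R (A n) = 0\<close> whenever \<open>\<zeta> \<bullet> u n < 0\<close>; these sets cover \<open>{\<omega>. \<zeta> \<notin> K \<omega>}\<close>.\<close>

lemma AE_mem_if_selector_means_nonneg:
  assumes R: "R \<in> borel_probs" and nonneg: "\<And>x. x \<in> selector_means R \<Longrightarrow> 0 \<le> \<zeta> \<bullet> x"
  shows "AE \<omega> in R. \<zeta> \<in> K \<omega>"
proof -
  interpret prob_space R using R by (simp add: borel_probs_def)
  have sets_R: "sets R = sets borel" using R by (simp add: borel_probs_def)
  define A where "A n = {\<omega>. u n \<in> interior (dual_cone (K \<omega>))}" for n
  obtain Y0 where Y0: "selector Y0" using ex_selector by blast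
  have null: "A n \<in> null_sets R" if neg: "\<zeta> \<bullet> u n < 0" for n
  proof -
    have A: "A n \<in> sets R" using sets_u sets_R by (simp add: A_def)
    define Z where "Z = (\<lambda>\<omega>. indicator (A n) \<omega> *\<^sub>R u n)"
    have "0 \<le> measure R (A n) * (\<zeta> \<bullet> u n)"
    proof (rule nonneg_if_nonneg_add_pos_multiples)
      fix \<epsilon> :: real assume "0 < \<epsilon>"
      have "Z \<in> borel_measurable borel"
        unfolding Z_def using sets_u[of n]
        by (intro borel_measurable_scaleR borel_measurable_indicator) (auto simp: A_def)
      moreover have "bounded (range Z)" using norm_u
        by (intro boundedI[where B = 1]) (auto simp: Z_def indicator_def)
      moreover have "Z \<omega> \<in> dual_cone (K \<omega>)" for \<omega>
        using interior_subset[of "dual_cone (K \<omega>)"]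
        by (auto simp: Z_def A_def indicator_def dual_cone_def)
      ultimately have "selector (\<lambda>\<omega>. \<epsilon> *\<^sub>R Y0 \<omega> + Z \<omega>)"
        using \<open>0 < \<epsilon>\<close> Y0 by (intro selector_add_dual selector_scaleR)
      moreover have "integral\<^sup>L R (\<lambda>\<omega>. \<epsilon> *\<^sub>R Y0 \<omega> + Z \<omega>)
          = \<epsilon> *\<^sub>R integral\<^sup>L R Y0 + measure R (A n) *\<^sub>R u n"
      proof -
        have "integrable R (indicator (A n) :: 'a \<Rightarrow> real)"
          using A by (intro integrable_real_indicator) (auto simp: less_top[symmetric])
        hence "integrable R Z" "integral\<^sup>L R Z = measure R (A n) *\<^sub>R u n"
          using A by (simp_all add: Z_def)
        thus ?thesis using integrable_selector[OF R Y0] by simp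
      qed
      ultimately have "0 \<le> \<zeta> \<bullet> (\<epsilon> *\<^sub>R integral\<^sup>L R Y0 + measure R (A n) *\<^sub>R u n)"
        using nonneg unfolding selector_means_def by fastforce
      thus "0 \<le> measure R (A n) * (\<zeta> \<bullet> u n) + \<epsilon> * (\<zeta> \<bullet> integral\<^sup>L R Y0)"
        by (simp add: inner_add_right)
    qed
    hence "measure R (A n) = 0" using neg measure_nonneg[of R "A n"]
      by (simp add: zero_le_mult_iff)
    thus ?thesis using A by (simp add: emeasure_eq_measure null_sets_def)
  qed
  have "(\<Union>n\<in>{n. \<zeta> \<bullet> u n < 0}. A n) \<in> null_sets R" using null by (intro null_sets_UN') auto
  moreover have "{\<omega> \<in> space R. \<zeta> \<notin> K \<omega>} \<subseteq> (\<Union>n\<in>{n. \<zeta> \<bullet> u n < 0}. A n)"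
    using u_separating by (fastforce simp: A_def)
  ultimately show ?thesis by (rule AE_I')
qed

lemma separating_vector_if_not_selector_mean:
  assumes R: "R \<in> borel_probs" and y: "y \<notin> selector_means R"
  shows "\<exists>\<zeta>\<in>sphere 0 1 \<inter> {\<zeta>. \<zeta> \<bullet> y \<le> 0}. AE \<omega> in R. \<zeta> \<in> K \<omega>"
proof -
  obtain a where a: "a \<noteq> 0" "a \<bullet> y \<le> 0" "\<forall>x\<in>selector_means R. 0 \<le> a \<bullet> x"
    using separating_hyperplane_convex_cone[OF convex_selector_means[OF R]
        selector_means_nonempty selector_means_scaleR y] by blast
  have "AE \<omega> in R. sgn a \<in> K \<omega>"
    using a(3) by (intro AE_mem_if_selector_means_nonneg[OF R]) (simp add: sgn_div_norm)
  moreover have "sgn a \<in> sphere 0 1 \<inter> {\<zeta>. \<zeta> \<bullet> y \<le> 0}"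
    using a(1,2) by (simp add: sgn_div_norm norm_sgn mult_nonneg_nonpos)
  ultimately show ?thesis by blast
qed

lemma selector_mean_of_dominating_prior:
  fixes K0 :: "(real^'d) set"
  assumes sub: "\<P> \<subseteq> borel_probs" and dir: "ac_directed \<P>" and closed: "\<And>\<omega>. closed (K \<omega>)"
    and NA2: "NA2 \<P> K0 K" and P: "P \<in> \<P>" and y: "y \<in> interior (dual_cone K0)"
  shows "\<exists>R\<in>\<P>. absolutely_continuous R P \<and> y \<in> selector_means R"
proof (rule ccontr)
  assume none: "\<not> (\<exists>R\<in>\<P>. absolutely_continuous R P \<and> y \<in> selector_means R)"
  define S where "S = {R \<in> \<P>. absolutely_continuous R P}"
  have S: "S \<subseteq> borel_probs" "ac_directed S" "S \<noteq> {}"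
  proof -
    show "S \<subseteq> borel_probs" using sub by (auto simp: S_def)
    show "ac_directed S"
      unfolding ac_directed_def
    proof (intro ballI)
      fix R1 R2 assume "R1 \<in> S" "R2 \<in> S"
      then obtain M where M: "M \<in> \<P>" "absolutely_continuous M R1" "absolutely_continuous M R2"
        using dir unfolding ac_directed_def S_def by blast
      have "absolutely_continuous M P"
        using absolutely_continuous_trans[OF M(2)] \<open>R1 \<in> S\<close> by (simp add: S_def)
      thus "\<exists>M\<in>S. absolutely_continuous M R1 \<and> absolutely_continuous M R2"
        using M by (auto simp: S_def)
    qed
    show "S \<noteq> {}" using P by (auto simp: S_def absolutely_continuous_def)
  qed
  define C where "C = sphere (0::real^'d) 1 \<inter> {\<zeta>. \<zeta> \<bullet> y \<le> 0}"
  have "{\<zeta>. \<zeta> \<bullet> y \<le> 0} = {\<zeta>. y \<bullet> \<zeta> \<le> 0}" by (simp add: inner_commute)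
  hence C: "compact C" by (simp add: C_def compact_Int_closed closed_halfspace_le)
  have separating: "\<exists>\<zeta>\<in>C. AE \<omega> in R. \<zeta> \<in> K \<omega>" if "R \<in> S" for R
    unfolding C_def
  proof (rule separating_vector_if_not_selector_mean)
    have R: "R \<in> \<P>" "absolutely_continuous R P" using that by (simp_all add: S_def)
    thus "R \<in> borel_probs" using sub by blast
    show "y \<notin> selector_means R" using none R by blast
  qed
  obtain \<zeta> where \<zeta>: "\<zeta> \<in> C" "\<forall>R\<in>S. AE \<omega> in R. \<zeta> \<in> K \<omega>"
    using AE_common_mem_if_ac_directed[OF S closed C separating] by blast
  have "qs \<P> (\<lambda>\<omega>. \<zeta> \<in> K \<omega>)"
  proof (rule qs_if_AE[OF sub])
    fix P' assume P': "P' \<in> \<P>"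
    then obtain M where M: "M \<in> \<P>" "absolutely_continuous M P" "absolutely_continuous M P'"
      using dir P unfolding ac_directed_def by blast
    hence "M \<in> S" by (simp add: S_def)
    hence "AE \<omega> in M. \<zeta> \<in> K \<omega>" using \<zeta>(2) by blast
    moreover have "sets P' = sets M" using sub M(1) P' by (auto simp: borel_probs_def)
    ultimately show "AE \<omega> in P'. \<zeta> \<in> K \<omega>" using absolutely_continuous_AE[OF _ M(3)] by simp
  qed
  hence "\<zeta> \<in> K0" using NA2 by (simp add: NA2_def)
  moreover have "\<zeta> \<noteq> 0" using \<zeta>(1) by (auto simp: C_def)
  ultimately have "0 < \<zeta> \<bullet> y" using interior_dual_cone_inner_pos[OF y] by blast
  thus False using \<zeta>(1) by (simp add: C_def)
qed

lemma selector_completion: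
  assumes "R \<in> borel_probs" "selector Y"
  shows "F1_measurable Y" "integrable (completion R) Y"
    "integral\<^sup>L (completion R) Y = integral\<^sup>L R Y"
proof -
  have sets_R: "sets R = sets borel" using assms(1) by (simp add: borel_probs_def)
  have Y: "Y \<in> borel_measurable borel" using assms(2) by (simp add: selector_def)
  hence "Y \<in> borel_measurable R" by (simp add: measurable_cong_sets[OF sets_R refl])
  thus "integrable (completion R) Y" "integral\<^sup>L (completion R) Y = integral\<^sup>L R Y"
    using integrable_selector[OF assms] by (simp_all add: integrable_completion integral_completion)
  show "F1_measurable Y"
    unfolding F1_measurable_def univ_sets_def
  proof (intro ballI CollectI)
    fix B :: "(real^'d) set" and \<mu> :: "'a measure" assume "B \<in> sets borel" "\<mu> \<in> borel_probs"
    moreover have "Y -` B = Y -` B \<inter> space borel" by simp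
    ultimately show "Y -` B \<in> sets (completion \<mu>)"
      using measurable_sets[OF Y] by (auto simp: borel_probs_def)
  qed
qed

end

lemma NA2_imp_interior_dual_representation:
  fixes \<P> :: "'a::topological_space measure set"
    and K0 :: "(real^'d::finite) set" and K1 :: "'a \<Rightarrow> (real^'d) set"
  assumes P_sub: "\<P> \<subseteq> borel_probs" and dir: "ac_directed \<P>"
    and K1: "\<And>\<omega>. solvency_cone (K1 \<omega>)"
    and K1_meas: "\<And>C. closed C \<Longrightarrow> {\<omega>. K1 \<omega> \<inter> C \<noteq> {}} \<in> sets borel"
    and K1_int: "\<And>\<omega>. interior (dual_cone (K1 \<omega>)) \<noteq> {}"
    and NA2: "NA2 \<P> K0 K1" and P: "P \<in> \<P>" and y: "y \<in> interior (dual_cone K0)"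
  shows "\<exists>R Y. R \<in> borel_probs \<and> absolutely_continuous R P \<and> dominated_by R \<P> \<and>
      F1_measurable Y \<and> bounded (range Y) \<and> (\<forall>\<omega>. Y \<omega> \<in> interior (dual_cone (K1 \<omega>))) \<and>
      integrable (completion R) Y \<and> y = (\<integral>\<omega>. Y \<omega> \<partial>completion R)"
proof -
  have K1_closed: "\<And>\<omega>. closed (K1 \<omega>)" and K1_convex: "\<And>\<omega>. convex (K1 \<omega>)"
    and K1_cone: "\<And>\<omega>. cone (K1 \<omega>)" and K1_ne: "\<And>\<omega>. K1 \<omega> \<noteq> {}"
    using solvency_coneD[OF K1] by blast+
  obtain u :: "nat \<Rightarrow> real^'d" where u: "\<And>n. norm (u n) \<le> 1"
    "\<And>\<omega>. \<exists>n. u n \<in> interior (dual_cone (K1 \<omega>))"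
    "\<And>\<omega> \<zeta>. \<zeta> \<notin> K1 \<omega> \<Longrightarrow> \<exists>n. u n \<in> interior (dual_cone (K1 \<omega>)) \<and> \<zeta> \<bullet> u n < 0"
    using countable_interior_dual_cone_family[where K = K1,
        OF K1_closed K1_convex K1_cone K1_ne K1_int] by blast
  interpret dual_cone_selectors K1 u
    using u sets_interior_dual_cone_borel[where K = K1, OF K1_closed K1_cone K1_meas]
    by unfold_locales
  obtain R Y where R: "R \<in> \<P>" "absolutely_continuous R P" and Y: "selector Y" "y = integral\<^sup>L R Y"
    using selector_mean_of_dominating_prior[OF P_sub dir K1_closed NA2 P y]
    by (auto simp: selector_means_def)
  have "R \<in> borel_probs" using R(1) P_sub by blast
  moreover have "dominated_by R \<P>"
    using R(1) by (auto simp: dominated_by_def absolutely_continuous_def)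
  moreover have "bounded (range Y)" "\<forall>\<omega>. Y \<omega> \<in> interior (dual_cone (K1 \<omega>))"
    using Y(1) by (simp_all add: selector_def)
  ultimately show ?thesis
    using R(2) Y selector_completion[OF \<open>R \<in> borel_probs\<close> Y(1)]
    by (intro exI[of _ R] exI[of _ Y]) simp
qed

lemma PCE_if_interior_dual_representation:
  assumes "\<And>P y. P \<in> \<P> \<Longrightarrow> y \<in> interior (dual_cone K0) \<Longrightarrow>
    \<exists>R Y. R \<in> borel_probs \<and> absolutely_continuous R P \<and> dominated_by R \<P> \<and> F1_measurable Y \<and>
      (\<forall>\<omega>. Y \<omega> \<in> interior (dual_cone (K1 \<omega>))) \<and>
      integrable (completion R) Y \<and> y = (\<integral>\<omega>. Y \<omega> \<partial>completion R)"
  shows "PCE \<P> K0 K1"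
  unfolding PCE_def
proof (intro ballI)
  fix P Y0 assume "P \<in> \<P>" and Y0: "Y0 \<in> interior (dual_cone K0)"
  then obtain R Y where "R \<in> borel_probs" "absolutely_continuous R P" "dominated_by R \<P>"
    "F1_measurable Y" "\<forall>\<omega>. Y \<omega> \<in> interior (dual_cone (K1 \<omega>))"
    "integrable (completion R) Y" "Y0 = (\<integral>\<omega>. Y \<omega> \<partial>completion R)"
    using assms by blast
  thus "\<exists>Q Z0 Z1. Q \<in> borel_probs \<and> F1_measurable Z1 \<and>
     absolutely_continuous Q P \<and> dominated_by Q \<P> \<and> Z0 = Y0 \<and>
     Z0 \<in> interior (dual_cone K0) \<and>
     (AE \<omega> in completion Q. Z1 \<omega> \<in> interior (dual_cone (K1 \<omega>))) \<and>
     integrable (completion Q) Z1 \<and> (\<integral>\<omega>. Z1 \<omega> \<partial>completion Q) = Z0"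
    using Y0 by (intro exI[of _ R] exI[of _ Y0] exI[of _ Y]) auto
qed

theorem proposition3p1:
  fixes \<P> :: "'a::polish_space measure set"
    and K0 :: "(real^'d::finite) set"
    and K1 :: "'a \<Rightarrow> (real^'d) set"
  assumes P_sub: "\<P> \<subseteq> borel_probs"
    and P_ne: "\<P> \<noteq> {}"
    and P_convex: "\<And>P Q (t::real). P \<in> \<P> \<Longrightarrow> Q \<in> \<P> \<Longrightarrow> 0 \<le> t \<Longrightarrow> t \<le> 1 \<Longrightarrow>
        \<exists>M\<in>\<P>. \<forall>A\<in>sets borel. measure M A = t * measure P A + (1 - t) * measure Q A"
    and P_analytic: "analytic_probs \<P>"
    and K0: "solvency_cone K0"
    and K1: "\<And>\<omega>. solvency_cone (K1 \<omega>)"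
    and K1_meas: "\<And>C. closed C \<Longrightarrow> {\<omega>. K1 \<omega> \<inter> C \<noteq> {}} \<in> sets borel"
    and K0_bd: "dual_cone K0 \<inter> frontier orthant = {0}"
    and K1_bd: "\<And>\<omega>. dual_cone (K1 \<omega>) \<inter> frontier orthant = {0}"
    and K0_int: "interior (dual_cone K0) \<noteq> {}"
    and K1_int: "\<And>\<omega>. interior (dual_cone (K1 \<omega>)) \<noteq> {}"
    and ratio: "\<exists>c>0.
        (\<forall>x\<in>dual_cone K0 - {0}. \<forall>y\<in>dual_cone K0 - {0}. \<forall>i j.
            x $ j / y $ j \<le> c * (x $ i / y $ i)) \<and>
        (\<forall>\<omega>. \<forall>x\<in>dual_cone (K1 \<omega>) - {0}. \<forall>y\<in>dual_cone (K1 \<omega>) - {0}. \<forall>i j.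
            x $ j / y $ j \<le> c * (x $ i / y $ i))"
    and NA2: "NA2 \<P> K0 K1"
  shows "(\<forall>P\<in>\<P>. \<forall>y\<in>interior (dual_cone K0).
            \<exists>R Y. R \<in> borel_probs \<and> absolutely_continuous R P \<and> dominated_by R \<P> \<and>
              F1_measurable Y \<and> bounded (range Y) \<and>
              (\<forall>\<omega>. Y \<omega> \<in> interior (dual_cone (K1 \<omega>))) \<and>
              y = (\<integral>\<omega>. Y \<omega> \<partial>completion R))
         \<and> PCE \<P> K0 K1"
proof -
  have "ac_directed \<P>"
    using P_sub P_convex by (rule ac_directed_if_mixtures)
  note represent = NA2_imp_interior_dual_representation[where ?K1.0 = K1,
      OF P_sub this K1 K1_meas K1_int NA2]
  have "PCE \<P> K0 K1"
    by (rule PCE_if_interior_dual_representation) (use represent in blast)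
  with represent show ?thesis by blast
qed

end
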